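(* Let $n\ge1$, $t_1<\dots<t_n$, $p_0,\dots,p_n>0$, $q_k=p_k^{-1/2}$, and let $a_k^\pm,b_k^\pm$ be the connection coefficients defined in the context. Then for every $\lambda\in(0,\infty)$, $$\frac{|b_0^+(\lambda)|^2}{q_0^2}+\frac{1}{q_0q_n}=\frac{|a_0^+(\lambda)|^2}{q_0^2}=\frac{|b_n^-(\lambda)|^2}{q_n^2}=\frac{1}{q_0q_n}+\frac{|a_n^-(\lambda)|^2}{q_n^2}.$$
   Context: For $z\in\mathbb{C}\setminus(-\infty,0]$, $\sqrt z$ is the principal square root. For $1\le k\le n$ let $$L_k(z)=\frac12\begin{bmatrix}\left(1+\frac{q_k}{q_{k-1}}\right)e^{it_k(q_{k-1}-q_k)\sqrt z} & \left(1-\frac{q_k}{q_{k-1}}\right)e^{-it_k(q_{k-1}+q_k)\sqrt z}\\ \left(1-\frac{q_k}{q_{k-1}}\right)e^{it_k(q_{k-1}+q_k)\sqrt z} & \left(1+\frac{q_k}{q_{k-1}}\right)e^{-it_k(q_{k-1}-q_k)\sqrt z}\end{bmatrix},\qquad R_k(z)=L_k(z)^{-1}.$$ The connection coefficients are $a_n^+=1$, $b_n^+=0$, $(a_l^+,b_l^+)^T=R_{l+1}(z)(a_{l+1}^+,b_{l+1}^+)^T$ for $l=n-1,\dots,0$; and $a_0^-=0$, $b_0^-=1$, $(a_j^-,b_j^-)^T=L_j(z)(a_{j-1}^-,b_{j-1}^-)^T$ for $j=1,\dots,n$. *)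

theory Defs
  imports "HOL-Analysis.Analysis"
begin

definition qcoef :: "(nat \<Rightarrow> real) \<Rightarrow> nat \<Rightarrow> real" where
  "qcoef p k = p k powr (-1/2)"

definition Lmat :: "(nat \<Rightarrow> real) \<Rightarrow> (nat \<Rightarrow> real) \<Rightarrow> nat \<Rightarrow> complex \<Rightarrow> complex^2^2" where
  "Lmat t q k z =
    (let r = complex_of_real (q k / q (k - 1));
         s = csqrt z;
         tk = complex_of_real (t k);
         dm = complex_of_real (q (k - 1) - q k);
         dp = complex_of_real (q (k - 1) + q k)
     in vector [
          vector [(1/2) * (1 + r) * exp (\<i> * tk * dm * s), (1/2) * (1 - r) * exp (- \<i> * tk * dp * s)],
          vector [(1/2) * (1 - r) * exp (\<i> * tk * dp * s), (1/2) * (1 + r) * exp (- \<i> * tk * dm * s)]])"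

definition Rmat :: "(nat \<Rightarrow> real) \<Rightarrow> (nat \<Rightarrow> real) \<Rightarrow> nat \<Rightarrow> complex \<Rightarrow> complex^2^2" where
  "Rmat t q k z = matrix_inv (Lmat t q k z)"

text \<open>plus_aux t q n z j = (a_{n-j}^+, b_{n-j}^+)\<close>
fun plus_aux :: "(nat \<Rightarrow> real) \<Rightarrow> (nat \<Rightarrow> real) \<Rightarrow> nat \<Rightarrow> complex \<Rightarrow> nat \<Rightarrow> complex^2" where
  "plus_aux t q n z 0 = vector [1, 0]"
| "plus_aux t q n z (Suc j) = Rmat t q (n - j) z *v plus_aux t q n z j"

definition coef_plus :: "(nat \<Rightarrow> real) \<Rightarrow> (nat \<Rightarrow> real) \<Rightarrow> nat \<Rightarrow> complex \<Rightarrow> nat \<Rightarrow> complex^2" where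
  "coef_plus t q n z l = plus_aux t q n z (n - l)"

text \<open>coef_minus t q z j = (a_j^-, b_j^-)\<close>
fun coef_minus :: "(nat \<Rightarrow> real) \<Rightarrow> (nat \<Rightarrow> real) \<Rightarrow> complex \<Rightarrow> nat \<Rightarrow> complex^2" where
  "coef_minus t q z 0 = vector [0, 1]"
| "coef_minus t q z (Suc j) = Lmat t q (Suc j) z *v coef_minus t q z j"

end

theory Submission
  imports Defs
begin

text \<open>For real \<open>\<lambda> \<ge> 0\<close> the square root is real, so every \<open>L\<^sub>k(\<lambda>)\<close> has the shape
  \<open>[[u, v], [cnj v, cnj u]]\<close>; this shape is closed under products and its determinant is
  \<open>|u|\<^sup>2 - |v|\<^sup>2\<close>. Since \<open>det L\<^sub>k = q\<^sub>k / q\<^sub>k\<^sub>-\<^sub>1\<close>, the transfer matrix \<open>M = L\<^sub>n \<cdots> L\<^sub>1\<close> is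
  \<open>[[U, V], [cnj V, cnj U]]\<close> with \<open>|U|\<^sup>2 - |V|\<^sup>2 = q\<^sub>n / q\<^sub>0\<close>. Now \<open>(a\<^sub>n\<^sup>-, b\<^sub>n\<^sup>-) = M (0, 1) = (V, cnj U)\<close>,
  while \<open>(a\<^sub>0\<^sup>+, b\<^sub>0\<^sup>+) = M\<^sup>-\<^sup>1 (1, 0) = (cnj U, - cnj V) / det M\<close> by Cramer's rule, and all four
  quantities of the theorem equal \<open>|U|\<^sup>2 / q\<^sub>n\<^sup>2\<close>.\<close>

lemma matrix_inv_right:
  fixes A :: "'a::semiring_1^'n^'m"
  assumes "invertible A"
  shows "A ** matrix_inv A = mat 1"
  using someI_ex[OF assms[unfolded invertible_def]] unfolding matrix_inv_def by blast

lemma matrix_vector_mult_2: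
  fixes A :: "'a::semiring_1^2^2"
  shows "A *v x = vector [A$1$1 * x$1 + A$1$2 * x$2, A$2$1 * x$1 + A$2$2 * x$2]"
  by (simp add: vec_eq_iff forall_2 matrix_vector_mult_def sum_2)

lemma matrix_vector_mult_2_eq_unit:
  fixes M :: "'a::field^2^2"
  assumes "M *v x = vector [1, 0]" and "det M \<noteq> 0"
  shows "x$1 = M$2$2 / det M" and "x$2 = - M$2$1 / det M"
proof -
  have e1: "M$1$1 * x$1 + M$1$2 * x$2 = 1" and e2: "M$2$1 * x$1 + M$2$2 * x$2 = 0"
    using assms(1) by (simp_all add: matrix_vector_mult_2 vec_eq_iff forall_2)
  have "det M * x$1 = M$2$2 * (M$1$1 * x$1 + M$1$2 * x$2) - M$1$2 * (M$2$1 * x$1 + M$2$2 * x$2)"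
    and "det M * x$2 = M$1$1 * (M$2$1 * x$1 + M$2$2 * x$2) - M$2$1 * (M$1$1 * x$1 + M$1$2 * x$2)"
    by (simp_all add: det_2 algebra_simps)
  with assms(2) show "x$1 = M$2$2 / det M" and "x$2 = - M$2$1 / det M"
    unfolding e1 e2 by (simp_all add: field_simps)
qed

definition su11_shaped :: "complex^2^2 \<Rightarrow> bool" where
  "su11_shaped M \<longleftrightarrow> M$2$1 = cnj (M$1$2) \<and> M$2$2 = cnj (M$1$1)"

lemma su11_shaped_mat_1: "su11_shaped (mat 1)"
  by (simp add: su11_shaped_def mat_def)

lemma su11_shaped_mult:
  assumes "su11_shaped A" and "su11_shaped B"
  shows "su11_shaped (A ** B)"
  using assms by (simp add: su11_shaped_def matrix_matrix_mult_def sum_2)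

lemma det_su11_shaped:
  assumes "su11_shaped M"
  shows "det M = of_real ((cmod (M$1$1))\<^sup>2 - (cmod (M$1$2))\<^sup>2)"
  using assms unfolding su11_shaped_def det_2 of_real_diff complex_norm_square by simp

definition exp_pair_mat :: "complex \<Rightarrow> complex \<Rightarrow> complex \<Rightarrow> complex \<Rightarrow> complex^2^2" where
  "exp_pair_mat c d a b =
     vector [vector [c * exp a, d * exp (- b)], vector [d * exp b, c * exp (- a)]]"

lemma det_exp_pair_mat: "det (exp_pair_mat c d a b) = c\<^sup>2 - d\<^sup>2"
proof -
  have "exp w * exp (- w) = 1" for w :: complex by (simp flip: exp_add)
  then show ?thesis by (simp add: exp_pair_mat_def det_2 power2_eq_square algebra_simps)
qed

lemma su11_shaped_exp_pair_mat:
  "su11_shaped (exp_pair_mat (of_real c) (of_real d) (\<i> * of_real x) (\<i> * of_real y))"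
  by (simp add: su11_shaped_def exp_pair_mat_def exp_cnj)

lemma Lmat_eq_exp_pair_mat:
  "Lmat t q k z = exp_pair_mat ((1 + r) / 2) ((1 - r) / 2)
      (\<i> * of_real (t k * (q (k - 1) - q k)) * csqrt z)
      (\<i> * of_real (t k * (q (k - 1) + q k)) * csqrt z)"
  if "r = of_real (q k / q (k - 1))"
  unfolding Lmat_def Let_def exp_pair_mat_def that by (simp add: mult.assoc)

lemma det_Lmat: "det (Lmat t q k z) = of_real (q k / q (k - 1))"
proof -
  have "((1 + r) / 2)\<^sup>2 - ((1 - r) / 2)\<^sup>2 = r" for r :: complex
    by (simp add: power2_eq_square field_simps)
  then show ?thesis by (simp add: Lmat_eq_exp_pair_mat[OF refl] det_exp_pair_mat)
qed

lemma su11_shaped_Lmat: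
  assumes "lam \<ge> 0"
  shows "su11_shaped (Lmat t q k (of_real lam))"
proof -
  let ?r = "q k / q (k - 1)"
  have "Lmat t q k (of_real lam) = exp_pair_mat (of_real ((1 + ?r) / 2)) (of_real ((1 - ?r) / 2))
      (\<i> * of_real (t k * (q (k - 1) - q k) * sqrt lam))
      (\<i> * of_real (t k * (q (k - 1) + q k) * sqrt lam))"
    using assms by (simp add: Lmat_eq_exp_pair_mat[OF refl] csqrt_of_real mult.assoc)
  then show ?thesis by (simp only: su11_shaped_exp_pair_mat)
qed

fun transfer_mat :: "(nat \<Rightarrow> real) \<Rightarrow> (nat \<Rightarrow> real) \<Rightarrow> complex \<Rightarrow> nat \<Rightarrow> complex^2^2" where
  "transfer_mat t q z 0 = mat 1"
| "transfer_mat t q z (Suc m) = Lmat t q (Suc m) z ** transfer_mat t q z m"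

lemma coef_minus_eq_transfer_mat: "coef_minus t q z m = transfer_mat t q z m *v vector [0, 1]"
  by (induction m) (simp_all add: matrix_vector_mul_assoc)

lemma det_transfer_mat:
  assumes "\<And>k. k \<le> m \<Longrightarrow> q k \<noteq> 0"
  shows "det (transfer_mat t q z m) = of_real (q m / q 0)"
  using assms
proof (induction m)
  case 0
  then show ?case by simp
next
  case (Suc m)
  then show ?case by (simp add: det_mul det_Lmat)
qed

lemma su11_shaped_transfer_mat:
  assumes "lam \<ge> 0"
  shows "su11_shaped (transfer_mat t q (of_real lam) m)"
  by (induction m) (simp_all add: su11_shaped_mat_1 su11_shaped_mult su11_shaped_Lmat assms)

lemma Lmat_mult_Rmat:
  assumes "q k \<noteq> 0" and "q (k - 1) \<noteq> 0"
  shows "Lmat t q k z ** Rmat t q k z = mat 1"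
  unfolding Rmat_def
  by (rule matrix_inv_right) (use assms in \<open>simp add: invertible_det_nz det_Lmat\<close>)

lemma coef_plus_self: "coef_plus t q n z n = vector [1, 0]"
  by (simp add: coef_plus_def)

lemma coef_plus_eq_Rmat:
  assumes "l < n"
  shows "coef_plus t q n z l = Rmat t q (Suc l) z *v coef_plus t q n z (Suc l)"
proof -
  have "n - l = Suc (n - Suc l)" and "n - (n - Suc l) = Suc l" using assms by simp_all
  then show ?thesis unfolding coef_plus_def by simp
qed

lemma transfer_mat_coef_plus:
  assumes "\<And>k. k \<le> n \<Longrightarrow> q k \<noteq> 0" and "l \<le> n"
  shows "transfer_mat t q z l *v coef_plus t q n z 0 = coef_plus t q n z l"
  using assms(2)
proof (induction l)
  case 0
  then show ?case by simp
next
  case (Suc l)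
  have "transfer_mat t q z (Suc l) *v coef_plus t q n z 0 = Lmat t q (Suc l) z *v coef_plus t q n z l"
    using Suc by (simp flip: matrix_vector_mul_assoc)
  also have "\<dots> = (Lmat t q (Suc l) z ** Rmat t q (Suc l) z) *v coef_plus t q n z (Suc l)"
    using Suc.prems by (simp add: coef_plus_eq_Rmat matrix_vector_mul_assoc)
  also have "\<dots> = coef_plus t q n z (Suc l)"
    using Suc.prems by (simp add: Lmat_mult_Rmat assms(1))
  finally show ?case .
qed

lemma connection_coefs_transfer_mat:
  fixes lam :: real and t q :: "nat \<Rightarrow> real" and n :: nat
  assumes "lam \<ge> 0" and q_nz: "\<And>k. k \<le> n \<Longrightarrow> q k \<noteq> 0"
  defines "M \<equiv> transfer_mat t q (of_real lam) n" and "D \<equiv> q n / q 0"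
  shows "coef_minus t q (of_real lam) n = vector [M$1$2, cnj (M$1$1)]"
    and "coef_plus t q n (of_real lam) 0 = vector [cnj (M$1$1) / of_real D, - cnj (M$1$2) / of_real D]"
    and "(cmod (M$1$1))\<^sup>2 - (cmod (M$1$2))\<^sup>2 = D"
proof -
  have "su11_shaped M"
    unfolding M_def using assms(1) by (rule su11_shaped_transfer_mat)
  then have shaped: "M$2$1 = cnj (M$1$2)" "M$2$2 = cnj (M$1$1)"
    and "det M = of_real ((cmod (M$1$1))\<^sup>2 - (cmod (M$1$2))\<^sup>2)"
    by (simp_all add: su11_shaped_def det_su11_shaped)
  moreover have det_M: "det M = of_real D"
    unfolding M_def D_def by (rule det_transfer_mat) (simp add: q_nz)
  ultimately show "(cmod (M$1$1))\<^sup>2 - (cmod (M$1$2))\<^sup>2 = D"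
    by (metis of_real_eq_iff)
  show "coef_minus t q (of_real lam) n = vector [M$1$2, cnj (M$1$1)]"
    by (simp add: coef_minus_eq_transfer_mat matrix_vector_mult_2 M_def[symmetric] shaped)
  have "D \<noteq> 0" using q_nz[of 0] q_nz[of n] by (simp add: D_def)
  moreover have "M *v coef_plus t q n (of_real lam) 0 = vector [1, 0]"
    using transfer_mat_coef_plus[of n q n t] q_nz by (simp add: M_def coef_plus_self)
  note matrix_vector_mult_2_eq_unit[OF this]
  ultimately show "coef_plus t q n (of_real lam) 0
      = vector [cnj (M$1$1) / of_real D, - cnj (M$1$2) / of_real D]"
    by (simp add: vec_eq_iff forall_2 det_M shaped)
qed

theorem corollary3p5:
  fixes n :: nat and t p :: "nat \<Rightarrow> real" and lam :: real
  assumes "n \<ge> 1"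
    and "\<And>i j. 1 \<le> i \<Longrightarrow> i < j \<Longrightarrow> j \<le> n \<Longrightarrow> t i < t j"
    and "\<And>k. k \<le> n \<Longrightarrow> p k > 0"
    and "lam > 0"
  defines "q \<equiv> qcoef p"
  defines "ap \<equiv> coef_plus t q n (complex_of_real lam) 0 $ 1"
      and "bp \<equiv> coef_plus t q n (complex_of_real lam) 0 $ 2"
      and "am \<equiv> coef_minus t q (complex_of_real lam) n $ 1"
      and "bm \<equiv> coef_minus t q (complex_of_real lam) n $ 2"
  shows "(cmod bp)\<^sup>2 / (q 0)\<^sup>2 + 1 / (q 0 * q n) = (cmod ap)\<^sup>2 / (q 0)\<^sup>2
       \<and> (cmod ap)\<^sup>2 / (q 0)\<^sup>2 = (cmod bm)\<^sup>2 / (q n)\<^sup>2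
       \<and> (cmod bm)\<^sup>2 / (q n)\<^sup>2 = 1 / (q 0 * q n) + (cmod am)\<^sup>2 / (q n)\<^sup>2"
proof -
  let ?z = "complex_of_real lam"
  define M where "M = transfer_mat t q ?z n"
  define D where "D = q n / q 0"
  have q_nz: "q k \<noteq> 0" if "k \<le> n" for k
    using assms(3)[OF that] by (simp add: q_def qcoef_def)
  note coefs = connection_coefs_transfer_mat[of lam n q t, folded M_def D_def]
  have "cmod ap = cmod (M$1$1) / \<bar>D\<bar>" "cmod bp = cmod (M$1$2) / \<bar>D\<bar>"
    "cmod am = cmod (M$1$2)" "cmod bm = cmod (M$1$1)"
    using coefs(1,2) q_nz assms(4) by (simp_all add: ap_def bp_def am_def bm_def norm_divide)
  moreover have "(cmod (M$1$1))\<^sup>2 = D + (cmod (M$1$2))\<^sup>2"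
    using coefs(3) q_nz assms(4) by simp
  moreover have "q n = D * q 0" "D \<noteq> 0" using q_nz[of 0] q_nz[of n] by (simp_all add: D_def)
  ultimately show ?thesis
    using q_nz[of 0] by (simp add: power_divide power_mult_distrib)
      (simp add: field_simps power2_eq_square power4_eq_xxxx)
qed

end
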